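(* Let $s\in\{+2,-2\}$ and let $\Psi$ be a smooth spin-$s$-weighted function satisfying $\mathfrak R^{[s]}\Psi=0$. Then, with $\mathcal L=\mathcal L^{[s]}$, $$(w^{-1}\underline L)(w^{-1}\underline L)\,w^2\,(w^{-1}L)(w^{-1}L)\Psi=\big(\mathcal L(\mathcal L-2)-12M\partial_t\big)\Psi,$$ $$(w^{-1}L)(w^{-1}L)\,w^2\,(w^{-1}\underline L)(w^{-1}\underline L)\Psi=\big(\mathcal L(\mathcal L-2)+12M\partial_t\big)\Psi.$$
   Context: Fix $M>0$, $k>0$; $\Delta(r)=r^2+k^2r^4-2Mr$, $w:=\Delta/r^4$. On the Schwarzschild–AdS exterior with metric $-(1+k^2r^2-\frac{2M}{r})dt^2+(1+k^2r^2-\frac{2M}{r})^{-1}dr^2+r^2(d\vartheta^2+\sin^2\vartheta d\varphi^2)$, let $r^\star$ be given by $dr^\star/dr=r^2/\Delta$, $r^\star(\infty)=\pi/2$; $L=\partial_t+\partial_{r^\star}$, $\underline L=\partial_t-\partial_{r^\star}$; $(w^{-1}L)$ denotes $\phi\mapsto w^{-1}L\phi$, $w^2$ denotes multiplication by $w^2$, and products denote compositions. $-\mathcal{L}^{[\pm2]}:=\frac{1}{\sin\vartheta}\partial_\vartheta(\sin\vartheta\partial_\vartheta)+\frac{1}{\sin^2\vartheta}\partial_\varphi^2\pm4i\frac{\cos\vartheta}{\sin^2\vartheta}\partial_\varphi-4\cot^2\vartheta-4$ on spin $\pm2$ functions. Regge–Wheeler operators: $\mathfrak R^{[\pm2]}\Psi=-L\underline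 L\Psi-w(\mathcal L^{[\pm2]}-\frac{6M}{r})\Psi$. *)

theory Defs
  imports "HOL-Analysis.Analysis"
begin

text \<open>Points of the exterior are written in Boyer--Lindquist-type coordinates
  (t, r, theta, phi).  Functions are complex valued (spin-weighted functions in
  the coordinate frame).\<close>

type_synonym point = "real \<times> real \<times> real \<times> real"

definition Delta :: "real \<Rightarrow> real \<Rightarrow> real \<Rightarrow> real" where
  "Delta M k r = r^2 + k^2 * r^4 - 2 * M * r"

definition w :: "real \<Rightarrow> real \<Rightarrow> real \<Rightarrow> real" where
  "w M k r = Delta M k r / r^4"

text \<open>The exterior region: r > r_+ (equivalently r > 0 and Delta(r) > 0),
  0 < theta < pi.\<close>
definition exterior :: "real \<Rightarrow> real \<Rightarrow> point set" where
  "exterior M k = {(t, r, th, ph). 0 < r \<and> 0 < Delta M k r \<and> 0 < th \<and> th < pi}"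

definition dd :: "point \<Rightarrow> (point \<Rightarrow> complex) \<Rightarrow> point \<Rightarrow> complex" where
  "dd v f x = vector_derivative (\<lambda>h. f (x + h *\<^sub>R v)) (at 0)"

fun iter_dd :: "point list \<Rightarrow> (point \<Rightarrow> complex) \<Rightarrow> point \<Rightarrow> complex" where
  "iter_dd [] f = f"
| "iter_dd (v # vs) f = dd v (iter_dd vs f)"

definition smooth_on :: "point set \<Rightarrow> (point \<Rightarrow> complex) \<Rightarrow> bool" where
  "smooth_on U f \<longleftrightarrow> (\<forall>vs. iter_dd vs f differentiable_on U)"

definition dt :: "(point \<Rightarrow> complex) \<Rightarrow> point \<Rightarrow> complex" where
  "dt f = dd (1, 0, 0, 0) f"
definition dr :: "(point \<Rightarrow> complex) \<Rightarrow> point \<Rightarrow> complex" where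
  "dr f = dd (0, 1, 0, 0) f"
definition dth :: "(point \<Rightarrow> complex) \<Rightarrow> point \<Rightarrow> complex" where
  "dth f = dd (0, 0, 1, 0) f"
definition dph :: "(point \<Rightarrow> complex) \<Rightarrow> point \<Rightarrow> complex" where
  "dph f = dd (0, 0, 0, 1) f"

text \<open>d/dr* = (Delta / r^2) d/dr, since dr*/dr = r^2/Delta.\<close>
definition drstar :: "real \<Rightarrow> real \<Rightarrow> (point \<Rightarrow> complex) \<Rightarrow> point \<Rightarrow> complex" where
  "drstar M k f = (\<lambda>(t, r, th, ph). of_real (Delta M k r / r^2) * dr f (t, r, th, ph))"

definition Lop :: "real \<Rightarrow> real \<Rightarrow> (point \<Rightarrow> complex) \<Rightarrow> point \<Rightarrow> complex" where
  "Lop M k f = (\<lambda>x. dt f x + drstar M k f x)"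

definition Lbar :: "real \<Rightarrow> real \<Rightarrow> (point \<Rightarrow> complex) \<Rightarrow> point \<Rightarrow> complex" where
  "Lbar M k f = (\<lambda>x. dt f x - drstar M k f x)"

definition mul_r :: "(real \<Rightarrow> real) \<Rightarrow> (point \<Rightarrow> complex) \<Rightarrow> point \<Rightarrow> complex" where
  "mul_r g f = (\<lambda>(t, r, th, ph). of_real (g r) * f (t, r, th, ph))"

definition winvL :: "real \<Rightarrow> real \<Rightarrow> (point \<Rightarrow> complex) \<Rightarrow> point \<Rightarrow> complex" where
  "winvL M k f = mul_r (\<lambda>r. 1 / w M k r) (Lop M k f)"

definition winvLbar :: "real \<Rightarrow> real \<Rightarrow> (point \<Rightarrow> complex) \<Rightarrow> point \<Rightarrow> complex" where
  "winvLbar M k f = mul_r (\<lambda>r. 1 / w M k r) (Lbar M k f)"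

text \<open>The angular operator \<L>^[s] for s = +2 or -2 (the term \<plusminus>4i becomes 2 s i).\<close>
definition angL :: "int \<Rightarrow> (point \<Rightarrow> complex) \<Rightarrow> point \<Rightarrow> complex" where
  "angL s f = (\<lambda>(t, r, th, ph).
     - ( of_real (1 / sin th) * dth (\<lambda>(t', r', th', ph'). of_real (sin th') * dth f (t', r', th', ph')) (t, r, th, ph)
       + of_real (1 / (sin th)^2) * dph (dph f) (t, r, th, ph)
       + of_int (2 * s) * \<i> * of_real (cos th / (sin th)^2) * dph f (t, r, th, ph)
       - of_real (4 * (cot th)^2) * f (t, r, th, ph)
       - 4 * f (t, r, th, ph)))"

definition RW :: "real \<Rightarrow> real \<Rightarrow> int \<Rightarrow> (point \<Rightarrow> complex) \<Rightarrow> point \<Rightarrow> complex" where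
  "RW M k s f = (\<lambda>(t, r, th, ph).
     - Lop M k (Lbar M k f) (t, r, th, ph)
     - of_real (w M k r) * (angL s f (t, r, th, ph) - of_real (6 * M / r) * f (t, r, th, ph)))"

end

theory Submission
  imports Defs
begin

(* Write P := 6M/r - w^-1 L Lbar; the Regge-Wheeler equation says exactly that the angular
   operator \<L> agrees with P on solutions.  For every smooth Psi, expanding the left-hand sides by
   the Leibniz rule and commuting the coordinate derivatives (Schwarz) gives
   P(P - 2) Psi -+ 12 M dt Psi, a polynomial identity in r, 1/r and 1/Delta.  Since \<L> only
   differentiates in (theta, phi) and P only in (t, r), the two commute, hence on solutions
   \<L>(\<L> - 2) Psi = \<L>(P - 2) Psi = (P - 2) \<L> Psi = P(P - 2) Psi. *)

section \<open>Directional derivatives\<close>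

lemma has_vector_derivative_along_line:
  assumes "(f has_derivative F) (at (p + s *\<^sub>R v))"
  shows "((\<lambda>s. f (p + s *\<^sub>R v)) has_vector_derivative F v) (at s)"
proof -
  have "((\<lambda>h. p + h *\<^sub>R v) has_derivative (\<lambda>h. h *\<^sub>R v)) (at s)"
    by (auto intro!: derivative_eq_intros)
  then have "((\<lambda>h. f (p + h *\<^sub>R v)) has_derivative (\<lambda>h. F (h *\<^sub>R v))) (at s)"
    using has_derivative_compose[of "\<lambda>h. p + h *\<^sub>R v" _ s UNIV f F, OF _ assms]
    by (simp add: o_def)
  moreover have "(\<lambda>h. F (h *\<^sub>R v)) = (\<lambda>h. h *\<^sub>R F v)"
    using linear_scale[OF has_derivative_linear[OF assms]] by auto
  ultimately show ?thesis
    by (simp add: has_vector_derivative_def)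
qed

lemma dd_eq_derivative:
  assumes "(f has_derivative F) (at y)"
  shows "dd v f y = F v"
  unfolding dd_def
  using has_vector_derivative_along_line[of f F y 0 v] assms
  by (auto intro: vector_derivative_at)

lemma has_derivative_dd:
  assumes "f differentiable (at y)"
  shows "(f has_derivative (\<lambda>v. dd v f y)) (at y)"
proof -
  obtain F where F: "(f has_derivative F) (at y)"
    using assms unfolding differentiable_def by blast
  moreover have "F = (\<lambda>v. dd v f y)"
    using dd_eq_derivative[OF F] by auto
  ultimately show ?thesis by simp
qed

lemma has_vector_derivative_dd_along_line:
  assumes "f differentiable (at (p + s *\<^sub>R v))"
  shows "((\<lambda>s. f (p + s *\<^sub>R v)) has_vector_derivative dd v f (p + s *\<^sub>R v)) (at s)"
  using has_vector_derivative_along_line[OF has_derivative_dd[OF assms]] .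

lemma dd_cong_open:
  assumes "open U" "x \<in> U" "\<And>y. y \<in> U \<Longrightarrow> f y = g y"
  shows "dd v f x = dd v g x"
proof -
  have "open {h::real. x + h *\<^sub>R v \<in> U}"
    using continuous_open_vimage[OF assms(1), of "\<lambda>h. x + h *\<^sub>R v"]
    by (auto simp: vimage_def intro!: continuous_intros)
  then have "eventually (\<lambda>h. x + h *\<^sub>R v \<in> U) (nhds (0::real))"
    using eventually_nhds_in_open[of _ 0] assms(2) by force
  then have "eventually (\<lambda>h. h \<in> UNIV \<longrightarrow> f (x + h *\<^sub>R v) = g (x + h *\<^sub>R v)) (nhds (0::real))"
    by eventually_elim (use assms(3) in auto)
  then show ?thesis
    unfolding dd_def by (rule vector_derivative_cong_eq) auto
qed

lemma dd_const: "dd v (\<lambda>z. c) y = 0"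
  using dd_eq_derivative[OF has_derivative_const] by simp

lemma dd_add:
  "f differentiable (at y) \<Longrightarrow> g differentiable (at y) \<Longrightarrow>
    dd v (\<lambda>z. f z + g z) y = dd v f y + dd v g y"
  by (rule dd_eq_derivative) (intro has_derivative_add has_derivative_dd)

lemma dd_diff:
  "f differentiable (at y) \<Longrightarrow> g differentiable (at y) \<Longrightarrow>
    dd v (\<lambda>z. f z - g z) y = dd v f y - dd v g y"
  by (rule dd_eq_derivative) (intro has_derivative_diff has_derivative_dd)

lemma dd_minus: "f differentiable (at y) \<Longrightarrow> dd v (\<lambda>z. - f z) y = - dd v f y"
  by (rule dd_eq_derivative) (intro has_derivative_minus has_derivative_dd)

lemma dd_mult:
  fixes f g :: "point \<Rightarrow> complex"
  shows "f differentiable (at y) \<Longrightarrow> g differentiable (at y) \<Longrightarrow>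
    dd v (\<lambda>z. f z * g z) y = dd v f y * g y + f y * dd v g y"
  using dd_eq_derivative[OF has_derivative_mult[OF has_derivative_dd has_derivative_dd]]
  by (simp add: mult.commute)

lemma dd_inverse:
  fixes f :: "point \<Rightarrow> complex"
  shows "f differentiable (at y) \<Longrightarrow> f y \<noteq> 0 \<Longrightarrow>
    dd v (\<lambda>z. inverse (f z)) y = - (inverse (f y) * dd v f y * inverse (f y))"
  by (rule dd_eq_derivative) (intro Deriv.has_derivative_inverse has_derivative_dd)

lemma has_derivative_of_real_comp:
  assumes "bounded_linear (l :: point \<Rightarrow> real)" "(g has_real_derivative g') (at (l y))"
  shows "((\<lambda>z. complex_of_real (g (l z))) has_derivative (\<lambda>h. complex_of_real (g' * l h))) (at y)"
proof -
  have "(g has_derivative (\<lambda>h. g' * h)) (at (l y))"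
    using assms(2) by (simp add: has_field_derivative_def)
  from has_derivative_compose[OF bounded_linear.has_derivative[OF assms(1) has_derivative_ident] this]
  show ?thesis
    by (rule bounded_linear.has_derivative[OF bounded_linear_of_real])
qed

lemma dd_of_real_comp:
  assumes "bounded_linear (l :: point \<Rightarrow> real)" "(g has_real_derivative g') (at (l y))"
  shows "dd v (\<lambda>z. complex_of_real (g (l z))) y = complex_of_real (l v) * complex_of_real g'"
  using dd_eq_derivative[OF has_derivative_of_real_comp[OF assms]] by (simp add: mult.commute)

section \<open>Smoothness\<close>

lemma differentiable_on_cong:
  assumes "\<And>y. y \<in> S \<Longrightarrow> f y = g y" "g differentiable_on S"
  shows "f differentiable_on S"
  unfolding differentiable_on_def differentiable_def
proof
  fix x assume x: "x \<in> S"
  then obtain D where D: "(g has_derivative D) (at x within S)"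
    using assms(2) unfolding differentiable_on_def differentiable_def by blast
  then show "\<exists>D. (f has_derivative D) (at x within S)"
    using has_derivative_transform[of x S f g, OF x assms(1) D] by blast
qed

lemma iter_dd_append: "iter_dd (ws @ vs) f = iter_dd ws (iter_dd vs f)"
  by (induction ws) auto

lemma iter_dd_cong_open:
  assumes "open U" "\<And>y. y \<in> U \<Longrightarrow> f y = g y" "y \<in> U"
  shows "iter_dd vs f y = iter_dd vs g y"
  using assms(3)
proof (induction vs arbitrary: y)
  case (Cons v vs)
  then show ?case
    using dd_cong_open[OF assms(1) Cons.prems Cons.IH] by simp
qed (use assms in simp)

text \<open>Closure of \<^const>\<open>smooth_on\<close> under products is proved by induction on the number
  of derivatives, which needs the truncated notion.\<close>

definition smooth_order :: "point set \<Rightarrow> nat \<Rightarrow> (point \<Rightarrow> complex) \<Rightarrow> bool" where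
  "smooth_order U n f \<longleftrightarrow> (\<forall>vs. length vs \<le> n \<longrightarrow> iter_dd vs f differentiable_on U)"

lemma smooth_on_iff_smooth_order: "smooth_on U f \<longleftrightarrow> (\<forall>n. smooth_order U n f)"
  unfolding smooth_on_def smooth_order_def by (meson order_refl)

lemma smooth_order_0_iff: "smooth_order U 0 f \<longleftrightarrow> f differentiable_on U"
  unfolding smooth_order_def by simp

lemma smooth_order_Suc_iff:
  "smooth_order U (Suc n) f \<longleftrightarrow> f differentiable_on U \<and> (\<forall>v. smooth_order U n (dd v f))"
proof
  assume f: "smooth_order U (Suc n) f"
  have "iter_dd vs (dd v f) differentiable_on U" if "length vs \<le> n" for v vs
    using f[unfolded smooth_order_def, rule_format, of "vs @ [v]"] that
    by (simp add: iter_dd_append)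
  then show "f differentiable_on U \<and> (\<forall>v. smooth_order U n (dd v f))"
    using f[unfolded smooth_order_def, rule_format, of "[]"]
    by (simp add: smooth_order_def)
next
  assume f: "f differentiable_on U \<and> (\<forall>v. smooth_order U n (dd v f))"
  show "smooth_order U (Suc n) f"
    unfolding smooth_order_def
  proof (intro allI impI)
    fix vs :: "point list"
    assume "length vs \<le> Suc n"
    then show "iter_dd vs f differentiable_on U"
    proof (cases vs rule: rev_exhaust)
      case (snoc ws v)
      with \<open>length vs \<le> Suc n\<close> have "length ws \<le> n"
        by simp
      then have "iter_dd ws (dd v f) differentiable_on U"
        using f unfolding smooth_order_def by blast
      then show ?thesis
        using snoc by (simp add: iter_dd_append)
    qed (use f in simp)
  qed
qed

lemma smooth_order_mono: "smooth_order U n f \<Longrightarrow> m \<le> n \<Longrightarrow> smooth_order U m f"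
  unfolding smooth_order_def by auto

lemma smooth_order_cong:
  assumes "open U" "\<And>y. y \<in> U \<Longrightarrow> f y = g y" "smooth_order U n g"
  shows "smooth_order U n f"
  unfolding smooth_order_def
proof (intro allI impI)
  fix vs :: "point list"
  assume "length vs \<le> n"
  then have "iter_dd vs g differentiable_on U"
    using assms(3) unfolding smooth_order_def by blast
  then show "iter_dd vs f differentiable_on U"
    by (rule differentiable_on_cong[rotated]) (rule iter_dd_cong_open[OF assms(1,2)])
qed

lemma smooth_order_differentiable_at:
  assumes "open U" "smooth_order U n f" "y \<in> U"
  shows "f differentiable (at y)"
  using smooth_order_mono[OF assms(2), of 0] assms(1,3)
  by (simp add: smooth_order_0_iff differentiable_on_eq_differentiable_at)

lemma smooth_order_const: "smooth_order U n (\<lambda>y. c)"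
proof -
  have "dd v (\<lambda>y. c) = (\<lambda>y. 0)" for v c
    by (simp add: fun_eq_iff dd_const)
  then show ?thesis
    by (induction n arbitrary: c) (simp_all add: smooth_order_0_iff smooth_order_Suc_iff)
qed

lemma smooth_order_add:
  assumes "open U"
  shows "smooth_order U n f \<Longrightarrow> smooth_order U n g \<Longrightarrow> smooth_order U n (\<lambda>y. f y + g y)"
proof (induction n arbitrary: f g)
  case 0
  then show ?case
    unfolding smooth_order_0_iff by (rule differentiable_on_add)
next
  case (Suc n)
  have f: "f differentiable_on U" "\<And>v. smooth_order U n (dd v f)"
    and g: "g differentiable_on U" "\<And>v. smooth_order U n (dd v g)"
    using Suc.prems unfolding smooth_order_Suc_iff by blast+
  have "smooth_order U n (dd v (\<lambda>y. f y + g y))" for v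
  proof (rule smooth_order_cong[OF assms])
    show "smooth_order U n (\<lambda>y. dd v f y + dd v g y)"
      using Suc.IH[OF f(2) g(2)] .
    show "dd v (\<lambda>y. f y + g y) y = dd v f y + dd v g y" if "y \<in> U" for y
      using f(1) g(1) that assms
      by (intro dd_add) (simp_all add: differentiable_on_eq_differentiable_at)
  qed
  moreover have "(\<lambda>y. f y + g y) differentiable_on U"
    using f(1) g(1) by (rule differentiable_on_add)
  ultimately show ?case
    by (simp add: smooth_order_Suc_iff)
qed

lemma smooth_order_mult:
  assumes "open U"
  shows "smooth_order U n f \<Longrightarrow> smooth_order U n g \<Longrightarrow> smooth_order U n (\<lambda>y. f y * g y)"
proof (induction n arbitrary: f g)
  case 0
  then show ?case
    unfolding smooth_order_0_iff by (rule differentiable_on_mult)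
next
  case (Suc n)
  have f: "f differentiable_on U" "\<And>v. smooth_order U n (dd v f)"
    and g: "g differentiable_on U" "\<And>v. smooth_order U n (dd v g)"
    using Suc.prems unfolding smooth_order_Suc_iff by blast+
  have "smooth_order U n (dd v (\<lambda>y. f y * g y))" for v
  proof (rule smooth_order_cong[OF assms])
    have "smooth_order U n f" "smooth_order U n g"
      using Suc.prems smooth_order_mono[of U "Suc n" _ n] by auto
    then show "smooth_order U n (\<lambda>y. dd v f y * g y + f y * dd v g y)"
      using Suc.IH[OF f(2)] Suc.IH[OF _ g(2)] by (intro smooth_order_add[OF assms])
    show "dd v (\<lambda>y. f y * g y) y = dd v f y * g y + f y * dd v g y" if "y \<in> U" for y
      using f(1) g(1) that assms
      by (intro dd_mult) (simp_all add: differentiable_on_eq_differentiable_at)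
  qed
  moreover have "(\<lambda>y. f y * g y) differentiable_on U"
    using f(1) g(1) by (rule differentiable_on_mult)
  ultimately show ?case
    by (simp add: smooth_order_Suc_iff)
qed

lemma smooth_order_minus:
  "open U \<Longrightarrow> smooth_order U n f \<Longrightarrow> smooth_order U n (\<lambda>y. - f y)"
  using smooth_order_mult[of U n "\<lambda>y. - 1" f] smooth_order_const[of U n "- 1"] by simp

lemma smooth_order_diff:
  "open U \<Longrightarrow> smooth_order U n f \<Longrightarrow> smooth_order U n g \<Longrightarrow> smooth_order U n (\<lambda>y. f y - g y)"
  using smooth_order_add[of U n f "\<lambda>y. - g y"] smooth_order_minus by simp

lemma smooth_order_inverse:
  assumes "open U" and nz: "\<And>y. y \<in> U \<Longrightarrow> f y \<noteq> 0"
  shows "smooth_order U n f \<Longrightarrow> smooth_order U n (\<lambda>y. inverse (f y))"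
proof (induction n)
  case 0
  then show ?case
    using assms by (auto simp: smooth_order_0_iff differentiable_on_eq_differentiable_at)
next
  case (Suc n)
  have f: "f differentiable_on U" "\<And>v. smooth_order U n (dd v f)"
    using Suc.prems unfolding smooth_order_Suc_iff by blast+
  have inv: "smooth_order U n (\<lambda>y. inverse (f y))"
    using Suc smooth_order_mono[of U "Suc n" f n] by simp
  have "smooth_order U n (dd v (\<lambda>y. inverse (f y)))" for v
  proof (rule smooth_order_cong[OF assms(1)])
    show "smooth_order U n (\<lambda>y. - (inverse (f y) * dd v f y * inverse (f y)))"
      using inv f(2) by (intro smooth_order_minus smooth_order_mult assms(1))
    show "dd v (\<lambda>y. inverse (f y)) y = - (inverse (f y) * dd v f y * inverse (f y))"
      if "y \<in> U" for y
      using f(1) that assms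
      by (intro dd_inverse) (simp_all add: differentiable_on_eq_differentiable_at)
  qed
  moreover have "(\<lambda>y. inverse (f y)) differentiable_on U"
    using f(1) assms by (auto simp: differentiable_on_eq_differentiable_at)
  ultimately show ?case
    by (simp add: smooth_order_Suc_iff)
qed

lemma differentiable_on_of_real_comp:
  assumes "bounded_linear (l :: point \<Rightarrow> real)" "\<forall>x. (g has_real_derivative g' x) (at x)"
  shows "(\<lambda>z. complex_of_real (g (l z))) differentiable_on U"
proof (rule differentiable_at_imp_differentiable_on)
  fix y
  show "(\<lambda>z. complex_of_real (g (l z))) differentiable (at y)"
    using has_derivative_of_real_comp[OF assms(1), of g "g' (l y)" y] assms(2)
    unfolding differentiable_def by blast
qed

lemma smooth_order_of_real_comp:
  assumes "open U" "bounded_linear (l :: point \<Rightarrow> real)"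
    and closed: "\<And>g. g \<in> G \<Longrightarrow> \<exists>g'\<in>G. \<forall>x. (g has_real_derivative g' x) (at x)"
  shows "g \<in> G \<Longrightarrow> smooth_order U n (\<lambda>z. complex_of_real (g (l z)))"
proof (induction n arbitrary: g)
  case 0
  with closed show ?case
    using differentiable_on_of_real_comp[OF assms(2)] unfolding smooth_order_0_iff by blast
next
  case (Suc n)
  with closed obtain g' where g': "g' \<in> G" "\<forall>x. (g has_real_derivative g' x) (at x)"
    by blast
  have "dd v (\<lambda>z. complex_of_real (g (l z))) = (\<lambda>y. complex_of_real (l v) * complex_of_real (g' (l y)))"
    for v using dd_of_real_comp[OF assms(2) g'(2)[rule_format]] by (rule ext)
  moreover have "smooth_order U n (\<lambda>y. complex_of_real (l v) * complex_of_real (g' (l y)))" for v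
    using Suc.IH[OF g'(1)] by (intro smooth_order_mult[OF assms(1) smooth_order_const])
  moreover note differentiable_on_of_real_comp[OF assms(2) g'(2)]
  ultimately show ?case
    by (simp add: smooth_order_Suc_iff)
qed

section \<open>Symmetry of second derivatives\<close>

lemma norm_increment_le:
  fixes \<phi> :: "real \<Rightarrow> 'a::real_normed_vector"
  assumes "0 \<le> h"
    and deriv: "\<And>t. t \<in> {0..h} \<Longrightarrow> (\<phi> has_vector_derivative \<phi>' t) (at t within {0..h})"
    and bound: "\<And>t. t \<in> {0..h} \<Longrightarrow> norm (\<phi>' t - c) \<le> B"
  shows "norm (\<phi> h - \<phi> 0 - h *\<^sub>R c) \<le> h * B"
proof -
  have "norm ((\<phi> h - h *\<^sub>R c) - (\<phi> 0 - 0 *\<^sub>R c)) \<le> B * norm (h - 0)"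
  proof (rule differentiable_bound[where f' = "\<lambda>t s. s *\<^sub>R (\<phi>' t - c)"])
    show "((\<lambda>t. \<phi> t - t *\<^sub>R c) has_derivative (\<lambda>s. s *\<^sub>R (\<phi>' t - c))) (at t within {0..h})"
      if "t \<in> {0..h}" for t
      using deriv[OF that] unfolding has_vector_derivative_def
      by (auto intro!: derivative_eq_intros simp: algebra_simps)
    show "onorm (\<lambda>s. s *\<^sub>R (\<phi>' t - c)) \<le> B" if "t \<in> {0..h}" for t
      using bound[OF that] onorm_scaleR_left[OF bounded_linear_ident, of "\<phi>' t - c"]
      by (simp only: onorm_id mult_1)
  qed (use assms in auto)
  with assms(1) show ?thesis
    by (simp add: algebra_simps)
qed

lemma second_difference_estimate:
  assumes "open U" "x \<in> U" "f differentiable_on U" "dd u f differentiable_on U"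
    and cont: "continuous (at x) (dd v (dd u f))" and "\<epsilon> > 0"
  shows "\<exists>\<delta>>0. \<forall>h. 0 < h \<and> h < \<delta> \<longrightarrow>
    norm (f (x + h *\<^sub>R u + h *\<^sub>R v) - f (x + h *\<^sub>R u) - f (x + h *\<^sub>R v) + f x
      - h\<^sup>2 *\<^sub>R dd v (dd u f) x) \<le> h\<^sup>2 * \<epsilon>"
proof -
  define g where "g = dd v (dd u f)"
  obtain d1 where d1: "d1 > 0" "\<And>z. dist z x < d1 \<Longrightarrow> dist (g z) (g x) < \<epsilon>"
    using cont \<open>\<epsilon> > 0\<close> unfolding continuous_at_eps_delta g_def by blast
  obtain d2 where d2: "d2 > 0" "ball x d2 \<subseteq> U"
    using assms(1,2) open_contains_ball by blast
  define \<delta> where "\<delta> = min d1 d2 / (norm u + norm v + 1)"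
  have K: "norm u + norm v + 1 > 0"
    by (simp add: add_nonneg_pos)
  then have "\<delta> > 0"
    unfolding \<delta>_def using d1 d2 by simp
  have near: "x + s *\<^sub>R u + t *\<^sub>R v \<in> U \<and> norm (g (x + s *\<^sub>R u + t *\<^sub>R v) - g x) \<le> \<epsilon>"
    if "s \<in> {0..h}" "t \<in> {0..h}" "h < \<delta>" for s t h
  proof -
    have "norm (s *\<^sub>R u + t *\<^sub>R v) \<le> h * norm u + h * norm v"
      using norm_triangle_ineq[of "s *\<^sub>R u" "t *\<^sub>R v"] that
        mult_right_mono[of s h "norm u"] mult_right_mono[of t h "norm v"] by auto
    also have "\<dots> \<le> \<delta> * norm u + \<delta> * norm v"
      using that by (intro add_mono mult_right_mono) auto
    also have "\<dots> < \<delta> * (norm u + norm v + 1)"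
      using \<open>\<delta> > 0\<close> by (simp add: algebra_simps)
    also have "\<dots> = min d1 d2"
      unfolding \<delta>_def using K by simp
    finally have "dist (x + s *\<^sub>R u + t *\<^sub>R v) x < min d1 d2"
      by (simp add: dist_norm add.assoc)
    then have "x + s *\<^sub>R u + t *\<^sub>R v \<in> ball x d2" "dist (g (x + s *\<^sub>R u + t *\<^sub>R v)) (g x) < \<epsilon>"
      using d1(2)[of "x + s *\<^sub>R u + t *\<^sub>R v"] by (auto simp: dist_commute)
    then show ?thesis
      using d2(2) by (auto simp: dist_norm)
  qed
  have "norm (f (x + h *\<^sub>R u + h *\<^sub>R v) - f (x + h *\<^sub>R u) - f (x + h *\<^sub>R v) + f x
      - h\<^sup>2 *\<^sub>R g x) \<le> h\<^sup>2 * \<epsilon>" if h: "0 < h" "h < \<delta>" for h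
  proof -
    txt \<open>Mean value inequality along \<open>v\<close> for \<open>dd u f\<close>, then along \<open>u\<close> for the
      first difference \<open>f (_ + h v) - f _\<close>.\<close>
    have diff_at: "F differentiable (at (x + s *\<^sub>R u + t *\<^sub>R v))"
      if "F differentiable_on U" "s \<in> {0..h}" "t \<in> {0..h}" for F :: "point \<Rightarrow> complex" and s t
      using bspec[OF that(1)[unfolded differentiable_on_eq_differentiable_at[OF assms(1)]]]
        near[OF that(2,3) h(2)] by simp
    have inner: "norm (dd u f (x + s *\<^sub>R u + h *\<^sub>R v) - dd u f (x + s *\<^sub>R u) - h *\<^sub>R g x) \<le> h * \<epsilon>"
      if s: "s \<in> {0..h}" for s
    proof -
      have "norm (dd u f (x + s *\<^sub>R u + h *\<^sub>R v) - dd u f (x + s *\<^sub>R u + 0 *\<^sub>R v) - h *\<^sub>R g x) \<le> h * \<epsilon>"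
      proof (rule norm_increment_le[where \<phi>' = "\<lambda>t. g (x + s *\<^sub>R u + t *\<^sub>R v)"])
        fix t assume t: "t \<in> {0..h}"
        show "((\<lambda>t. dd u f (x + s *\<^sub>R u + t *\<^sub>R v)) has_vector_derivative g (x + s *\<^sub>R u + t *\<^sub>R v))
            (at t within {0..h})"
          unfolding g_def
          by (rule has_vector_derivative_at_within, rule has_vector_derivative_dd_along_line,
              rule diff_at[OF assms(4) s t])
        show "norm (g (x + s *\<^sub>R u + t *\<^sub>R v) - g x) \<le> \<epsilon>"
          using near[OF s t h(2)] by simp
      qed (use h in simp)
      then show ?thesis by simp
    qed
    have swap: "x + t *\<^sub>R v + s *\<^sub>R u = x + s *\<^sub>R u + t *\<^sub>R v" for s t
      by (simp add: algebra_simps)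
    have outer: "norm ((f (x + h *\<^sub>R v + h *\<^sub>R u) - f (x + h *\<^sub>R u))
        - (f (x + h *\<^sub>R v + 0 *\<^sub>R u) - f (x + 0 *\<^sub>R u)) - h *\<^sub>R (h *\<^sub>R g x)) \<le> h * (h * \<epsilon>)"
    proof (rule norm_increment_le[where \<phi>' = "\<lambda>s. dd u f (x + h *\<^sub>R v + s *\<^sub>R u) - dd u f (x + s *\<^sub>R u)"])
      fix s assume s: "s \<in> {0..h}"
      have "f differentiable (at (x + h *\<^sub>R v + s *\<^sub>R u))" "f differentiable (at (x + s *\<^sub>R u))"
        using diff_at[OF assms(3) s, of h] diff_at[OF assms(3) s, of 0] h by (simp_all add: swap[of h s])
      then show "((\<lambda>s. f (x + h *\<^sub>R v + s *\<^sub>R u) - f (x + s *\<^sub>R u)) has_vector_derivative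
          dd u f (x + h *\<^sub>R v + s *\<^sub>R u) - dd u f (x + s *\<^sub>R u)) (at s within {0..h})"
        by (intro has_vector_derivative_at_within[OF has_vector_derivative_diff]
            has_vector_derivative_dd_along_line)
      show "norm (dd u f (x + h *\<^sub>R v + s *\<^sub>R u) - dd u f (x + s *\<^sub>R u) - h *\<^sub>R g x) \<le> h * \<epsilon>"
        using inner[OF s] unfolding swap[of h s] .
    qed (use h in simp)
    then show ?thesis
      by (simp add: swap[of h h] power2_eq_square algebra_simps)
  qed
  with \<open>\<delta> > 0\<close> show ?thesis
    unfolding g_def by blast
qed

lemma dd_commute:
  assumes "open U" "x \<in> U" "f differentiable_on U"
    and "dd u f differentiable_on U" "dd v f differentiable_on U"
    and "continuous (at x) (dd v (dd u f))" "continuous (at x) (dd u (dd v f))"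
  shows "dd v (dd u f) x = dd u (dd v f) x"
proof -
  have "norm (dd v (dd u f) x - dd u (dd v f) x) \<le> 0 + \<epsilon>" if "\<epsilon> > 0" for \<epsilon>
  proof -
    obtain \<delta>1 where "\<delta>1 > 0" and \<delta>1: "\<And>h. 0 < h \<and> h < \<delta>1 \<Longrightarrow>
      norm (f (x + h *\<^sub>R u + h *\<^sub>R v) - f (x + h *\<^sub>R u) - f (x + h *\<^sub>R v) + f x
        - h\<^sup>2 *\<^sub>R dd v (dd u f) x) \<le> h\<^sup>2 * (\<epsilon> / 2)"
      using second_difference_estimate[OF assms(1-4,6), of "\<epsilon> / 2"] \<open>\<epsilon> > 0\<close> by auto
    obtain \<delta>2 where "\<delta>2 > 0" and \<delta>2: "\<And>h. 0 < h \<and> h < \<delta>2 \<Longrightarrow>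
      norm (f (x + h *\<^sub>R v + h *\<^sub>R u) - f (x + h *\<^sub>R v) - f (x + h *\<^sub>R u) + f x
        - h\<^sup>2 *\<^sub>R dd u (dd v f) x) \<le> h\<^sup>2 * (\<epsilon> / 2)"
      using second_difference_estimate[OF assms(1-3,5,7), of "\<epsilon> / 2"] \<open>\<epsilon> > 0\<close> by auto
    define h where "h = min \<delta>1 \<delta>2 / 2"
    have h: "0 < h" "h < \<delta>1" "h < \<delta>2"
      unfolding h_def using \<open>\<delta>1 > 0\<close> \<open>\<delta>2 > 0\<close> by auto
    define D where "D = f (x + h *\<^sub>R u + h *\<^sub>R v) - f (x + h *\<^sub>R u) - f (x + h *\<^sub>R v) + f x"
    have "f (x + h *\<^sub>R v + h *\<^sub>R u) - f (x + h *\<^sub>R v) - f (x + h *\<^sub>R u) + f x = D"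
      unfolding D_def by (simp add: algebra_simps)
    then have "h\<^sup>2 * norm (dd v (dd u f) x - dd u (dd v f) x)
        = norm ((D - h\<^sup>2 *\<^sub>R dd u (dd v f) x) - (D - h\<^sup>2 *\<^sub>R dd v (dd u f) x))"
      by (simp add: algebra_simps flip: scaleR_diff_right)
    also have "\<dots> \<le> norm (D - h\<^sup>2 *\<^sub>R dd u (dd v f) x) + norm (D - h\<^sup>2 *\<^sub>R dd v (dd u f) x)"
      by (rule norm_triangle_ineq4)
    also have "\<dots> \<le> h\<^sup>2 * (\<epsilon> / 2) + h\<^sup>2 * (\<epsilon> / 2)"
      using \<delta>1[of h] \<delta>2[of h] h \<open>_ = D\<close> unfolding D_def by (intro add_mono) auto
    finally show ?thesis
      using h by (simp add: algebra_simps)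
  qed
  then show ?thesis
    using field_le_epsilon[of "norm (dd v (dd u f) x - dd u (dd v f) x)" 0] by simp
qed

lemma smooth_on_cong:
  "open U \<Longrightarrow> (\<And>y. y \<in> U \<Longrightarrow> f y = g y) \<Longrightarrow> smooth_on U g \<Longrightarrow> smooth_on U f"
  unfolding smooth_on_iff_smooth_order using smooth_order_cong by blast

lemma smooth_on_const: "smooth_on U (\<lambda>y. c)"
  unfolding smooth_on_iff_smooth_order using smooth_order_const by blast

lemma smooth_on_add: "open U \<Longrightarrow> smooth_on U f \<Longrightarrow> smooth_on U g \<Longrightarrow> smooth_on U (\<lambda>y. f y + g y)"
  unfolding smooth_on_iff_smooth_order using smooth_order_add by blast

lemma smooth_on_diff: "open U \<Longrightarrow> smooth_on U f \<Longrightarrow> smooth_on U g \<Longrightarrow> smooth_on U (\<lambda>y. f y - g y)"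
  unfolding smooth_on_iff_smooth_order using smooth_order_diff by blast

lemma smooth_on_minus: "open U \<Longrightarrow> smooth_on U f \<Longrightarrow> smooth_on U (\<lambda>y. - f y)"
  unfolding smooth_on_iff_smooth_order using smooth_order_minus by blast

lemma smooth_on_mult: "open U \<Longrightarrow> smooth_on U f \<Longrightarrow> smooth_on U g \<Longrightarrow> smooth_on U (\<lambda>y. f y * g y)"
  unfolding smooth_on_iff_smooth_order using smooth_order_mult by blast

lemma smooth_on_inverse:
  "open U \<Longrightarrow> (\<And>y. y \<in> U \<Longrightarrow> f y \<noteq> 0) \<Longrightarrow> smooth_on U f \<Longrightarrow> smooth_on U (\<lambda>y. inverse (f y))"
  unfolding smooth_on_iff_smooth_order using smooth_order_inverse by blast

lemma smooth_on_dd: "smooth_on U f \<Longrightarrow> smooth_on U (dd v f)"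
  unfolding smooth_on_def by (metis iter_dd_append iter_dd.simps)

lemma smooth_on_differentiable_on: "smooth_on U f \<Longrightarrow> f differentiable_on U"
  unfolding smooth_on_def by (metis iter_dd.simps(1))

lemma smooth_on_of_real_comp:
  "open U \<Longrightarrow> bounded_linear l \<Longrightarrow> (\<And>g. g \<in> G \<Longrightarrow> \<exists>g'\<in>G. \<forall>x. (g has_real_derivative g' x) (at x))
    \<Longrightarrow> g \<in> G \<Longrightarrow> smooth_on U (\<lambda>z. complex_of_real (g (l z)))"
  unfolding smooth_on_iff_smooth_order using smooth_order_of_real_comp by blast

lemma smooth_on_differentiable_at:
  "open U \<Longrightarrow> smooth_on U f \<Longrightarrow> y \<in> U \<Longrightarrow> f differentiable (at y)"
  unfolding smooth_on_iff_smooth_order using smooth_order_differentiable_at by blast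

lemma smooth_on_dd_commute:
  assumes "open U" "smooth_on U f" "x \<in> U"
  shows "dd v (dd u f) x = dd u (dd v f) x"
proof (rule dd_commute[OF assms(1,3)])
  have "smooth_on U (dd v (dd u f))" "smooth_on U (dd u (dd v f))"
    using assms(2) by (simp_all add: smooth_on_dd)
  then show "continuous (at x) (dd v (dd u f))" "continuous (at x) (dd u (dd v f))"
    using smooth_on_differentiable_at[OF assms(1) _ assms(3)] differentiable_imp_continuous_within
    by blast+
  show "f differentiable_on U" "dd u f differentiable_on U" "dd v f differentiable_on U"
    using assms(2) smooth_on_dd smooth_on_differentiable_on by blast+
qed

text \<open>Extending directional derivatives by zero off \<open>U\<close> makes \<^term>\<open>dd_on U v f\<close>
  depend only on \<open>f\<close> restricted to \<open>U\<close>, so the Leibniz rules below hold as equations of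
  functions and can be used by the simplifier inside the operators.\<close>

definition dd_on :: "point set \<Rightarrow> point \<Rightarrow> (point \<Rightarrow> complex) \<Rightarrow> point \<Rightarrow> complex" where
  "dd_on U v f y = (if y \<in> U then dd v f y else 0)"

lemma dd_on_cong:
  assumes "open U" "\<And>y. y \<in> U \<Longrightarrow> f y = g y"
  shows "dd_on U v f = dd_on U v g"
  using dd_cong_open[of U _ f g v] assms by (auto simp: dd_on_def)

lemma smooth_on_dd_on: "open U \<Longrightarrow> smooth_on U f \<Longrightarrow> smooth_on U (dd_on U v f)"
  by (rule smooth_on_cong[of U _ "dd v f"]) (auto simp: dd_on_def intro: smooth_on_dd)

lemma smooth_on_indicator: "open U \<Longrightarrow> smooth_on U (indicator U :: point \<Rightarrow> complex)"
  by (rule smooth_on_cong[of U _ "\<lambda>y. 1"]) (auto intro: smooth_on_const)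

lemma dd_on_const: "dd_on U v (\<lambda>y. c) = (\<lambda>y. 0)"
  by (simp add: fun_eq_iff dd_on_def dd_const)

lemma dd_on_indicator: "open U \<Longrightarrow> dd_on U v (indicator U) = (\<lambda>y. 0)"
  using dd_on_cong[of U "indicator U" "\<lambda>y. 1" v] by (simp add: dd_on_const)

lemma
  assumes "open U" "smooth_on U f" "smooth_on U g"
  shows dd_on_add: "dd_on U v (\<lambda>y. f y + g y) = (\<lambda>y. dd_on U v f y + dd_on U v g y)"
    and dd_on_diff: "dd_on U v (\<lambda>y. f y - g y) = (\<lambda>y. dd_on U v f y - dd_on U v g y)"
    and dd_on_mult: "dd_on U v (\<lambda>y. f y * g y) = (\<lambda>y. dd_on U v f y * g y + f y * dd_on U v g y)"
  using dd_add dd_diff dd_mult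
    smooth_on_differentiable_at[OF assms(1,2)] smooth_on_differentiable_at[OF assms(1,3)]
  by (simp_all add: dd_on_def fun_eq_iff)

lemma dd_on_minus:
  "open U \<Longrightarrow> smooth_on U f \<Longrightarrow> dd_on U v (\<lambda>y. - f y) = (\<lambda>y. - dd_on U v f y)"
  using dd_minus smooth_on_differentiable_at by (simp add: dd_on_def fun_eq_iff)

lemma dd_on_commute:
  assumes "open U" "smooth_on U f"
  shows "dd_on U u (dd_on U v f) = dd_on U v (dd_on U u f)"
proof
  fix y
  show "dd_on U u (dd_on U v f) y = dd_on U v (dd_on U u f) y"
  proof (cases "y \<in> U")
    case True
    have "dd u (dd_on U v f) y = dd u (dd v f) y" "dd v (dd_on U u f) y = dd v (dd u f) y"
      using dd_cong_open[OF assms(1) True, of "dd_on U v f" "dd v f"]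
        dd_cong_open[OF assms(1) True, of "dd_on U u f" "dd u f"]
      by (simp_all add: dd_on_def)
    then show ?thesis
      using smooth_on_dd_commute[OF assms True] True by (simp add: dd_on_def)
  qed (simp add: dd_on_def)
qed

lemma dd_on_of_real_comp:
  assumes "open U" "bounded_linear l"
    and "\<And>y. y \<in> U \<Longrightarrow> (g has_real_derivative g' (l y)) (at (l y))"
  shows "dd_on U v (\<lambda>z. complex_of_real (g (l z)))
    = (\<lambda>y. indicator U y * complex_of_real (l v) * complex_of_real (g' (l y)))"
  using dd_of_real_comp[OF assms(2,3)] by (auto simp: dd_on_def fun_eq_iff)

section \<open>Coefficients on the exterior\<close>

abbreviation rad :: "point \<Rightarrow> real" where "rad y \<equiv> fst (snd y)"
abbreviation theta :: "point \<Rightarrow> real" where "theta y \<equiv> fst (snd (snd y))"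

abbreviation "e_t \<equiv> (1, 0, 0, 0) :: point"
abbreviation "e_r \<equiv> (0, 1, 0, 0) :: point"
abbreviation "e_theta \<equiv> (0, 0, 1, 0) :: point"
abbreviation "e_phi \<equiv> (0, 0, 0, 1) :: point"

lemma bounded_linear_rad: "bounded_linear rad"
  by (intro bounded_linear_compose[OF bounded_linear_fst bounded_linear_snd])

lemma bounded_linear_theta: "bounded_linear theta"
  by (intro bounded_linear_compose[OF bounded_linear_fst] bounded_linear_compose[OF bounded_linear_snd]
      bounded_linear_snd)

lemma open_exterior: "open (exterior M k)"
proof -
  have "exterior M k = {y. 0 < rad y} \<inter> {y. 0 < Delta M k (rad y)} \<inter> {y. 0 < theta y} \<inter> {y. theta y < pi}"
    unfolding exterior_def by auto
  also have "open \<dots>"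
    unfolding Delta_def by (intro open_Int open_Collect_less continuous_intros)
  finally show ?thesis .
qed

lemma exterior_D:
  assumes "y \<in> exterior M k"
  shows "0 < rad y" "0 < Delta M k (rad y)" "0 < w M k (rad y)" "0 < sin (theta y)"
  using assms sin_gt_zero unfolding exterior_def w_def by auto

definition c_r :: "point \<Rightarrow> complex" where "c_r y = of_real (rad y)"
definition c_inv_r :: "point \<Rightarrow> complex" where "c_inv_r y = of_real (1 / rad y)"
definition c_w :: "real \<Rightarrow> real \<Rightarrow> point \<Rightarrow> complex" where "c_w M k y = of_real (w M k (rad y))"
definition c_inv_w :: "real \<Rightarrow> real \<Rightarrow> point \<Rightarrow> complex" where "c_inv_w M k y = of_real (1 / w M k (rad y))"
definition c_drstar :: "real \<Rightarrow> real \<Rightarrow> point \<Rightarrow> complex" where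
  "c_drstar M k y = of_real (Delta M k (rad y) / (rad y)^2)"
definition c_sin :: "point \<Rightarrow> complex" where "c_sin y = of_real (sin (theta y))"
definition c_cos :: "point \<Rightarrow> complex" where "c_cos y = of_real (cos (theta y))"
definition c_inv_sin :: "point \<Rightarrow> complex" where "c_inv_sin y = of_real (1 / sin (theta y))"

context
  fixes M k :: real
begin

abbreviation "U \<equiv> exterior M k"

lemma smooth_on_c_r: "smooth_on U c_r"
proof -
  have "\<exists>g'\<in>{\<lambda>x. x, \<lambda>x. 1, \<lambda>x. 0}. \<forall>x. (g has_real_derivative g' x) (at x)"
    if "g \<in> {\<lambda>x. x, \<lambda>x. 1, \<lambda>x. 0}" for g :: "real \<Rightarrow> real"
    using that by (auto intro!: derivative_eq_intros)
  then show ?thesis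
    unfolding c_r_def using smooth_on_of_real_comp[OF open_exterior bounded_linear_rad] by blast
qed

lemma smooth_on_c_sin: "smooth_on U c_sin" and smooth_on_c_cos: "smooth_on U c_cos"
proof -
  let ?G = "{sin, cos, \<lambda>x. - sin x, \<lambda>x. - cos x}"
  have "\<exists>g'\<in>?G. \<forall>x. (g has_real_derivative g' x) (at x)" if "g \<in> ?G" for g
    using that by (auto intro!: derivative_eq_intros)
  then show "smooth_on U c_sin" "smooth_on U c_cos"
    unfolding c_sin_def c_cos_def
    using smooth_on_of_real_comp[OF open_exterior bounded_linear_theta, of ?G] by auto
qed

lemma smooth_on_c_inv_r: "smooth_on U c_inv_r"
proof (rule smooth_on_cong[OF open_exterior _ smooth_on_inverse[OF open_exterior _ smooth_on_c_r]])
  show "c_inv_r y = inverse (c_r y)" if "y \<in> U" for y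
    unfolding c_inv_r_def c_r_def by (simp add: divide_inverse)
  show "c_r y \<noteq> 0" if "y \<in> U" for y
    using exterior_D[OF that] unfolding c_r_def by simp
qed

lemma smooth_on_c_inv_sin: "smooth_on U c_inv_sin"
proof (rule smooth_on_cong[OF open_exterior _ smooth_on_inverse[OF open_exterior _ smooth_on_c_sin]])
  show "c_inv_sin y = inverse (c_sin y)" if "y \<in> U" for y
    unfolding c_inv_sin_def c_sin_def by (simp add: divide_inverse)
  show "c_sin y \<noteq> 0" if "y \<in> U" for y
    using exterior_D[OF that] unfolding c_sin_def by simp
qed

lemma smooth_on_c_w: "smooth_on U (c_w M k)"
proof (rule smooth_on_cong[OF open_exterior])
  show "c_w M k y = c_inv_r y * c_inv_r y + of_real k * of_real k - 2 * of_real M * (c_inv_r y * c_inv_r y * c_inv_r y)"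
    if "y \<in> U" for y
    using exterior_D[OF that] unfolding c_w_def c_inv_r_def w_def Delta_def
    by (simp add: field_simps power2_eq_square power4_eq_xxxx del: of_real_mult of_real_add of_real_diff)
      (simp add: field_simps)
  show "smooth_on U (\<lambda>y. c_inv_r y * c_inv_r y + of_real k * of_real k - 2 * of_real M * (c_inv_r y * c_inv_r y * c_inv_r y))"
    by (intro smooth_on_add smooth_on_diff smooth_on_mult smooth_on_const smooth_on_c_inv_r open_exterior)
qed

lemma smooth_on_c_inv_w: "smooth_on U (c_inv_w M k)"
proof (rule smooth_on_cong[OF open_exterior _ smooth_on_inverse[OF open_exterior _ smooth_on_c_w]])
  show "c_inv_w M k y = inverse (c_w M k y)" if "y \<in> U" for y
    unfolding c_inv_w_def c_w_def by (simp add: divide_inverse)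
  show "c_w M k y \<noteq> 0" if "y \<in> U" for y
    using exterior_D[OF that] unfolding c_w_def by simp
qed

lemma smooth_on_c_drstar: "smooth_on U (c_drstar M k)"
proof (rule smooth_on_cong[OF open_exterior])
  show "c_drstar M k y = 1 + of_real k * of_real k * (c_r y * c_r y) - 2 * of_real M * c_inv_r y" if "y \<in> U" for y
    using exterior_D[OF that] unfolding c_drstar_def c_inv_r_def c_r_def Delta_def
    by (simp add: field_simps power2_eq_square power4_eq_xxxx del: of_real_mult of_real_add of_real_diff)
      (simp add: field_simps)
  show "smooth_on U (\<lambda>y. 1 + of_real k * of_real k * (c_r y * c_r y) - 2 * of_real M * c_inv_r y)"
    by (intro smooth_on_add smooth_on_diff smooth_on_mult smooth_on_const smooth_on_c_inv_r smooth_on_c_r open_exterior)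
qed

lemma has_real_derivative_w:
  "r > 0 \<Longrightarrow> (w M k has_real_derivative (6 * M / r^4 - 2 / r^3)) (at r)"
  unfolding w_def[abs_def] Delta_def
  by (auto intro!: derivative_eq_intros simp: field_simps eval_nat_numeral)

lemma dd_on_c_r: "dd_on U v c_r = (\<lambda>y. indicator U y * of_real (rad v))"
  using dd_on_of_real_comp[OF open_exterior bounded_linear_rad, where g = "\<lambda>r. r" and g' = "\<lambda>r. 1"]
  unfolding c_r_def by simp

lemma dd_on_c_inv_r: "dd_on U v c_inv_r = (\<lambda>y. - (indicator U y * of_real (rad v) * (c_inv_r y * c_inv_r y)))"
proof -
  have "dd_on U v c_inv_r = (\<lambda>y. indicator U y * of_real (rad v) * of_real (- 1 / (rad y)^2))"
    unfolding c_inv_r_def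
  proof (rule dd_on_of_real_comp[OF open_exterior bounded_linear_rad, where g' = "\<lambda>r. - 1 / r^2"])
    fix y assume "y \<in> U"
    then have "rad y \<noteq> 0" using exterior_D(1) less_imp_neq by metis
    then show "((\<lambda>r. 1 / r) has_real_derivative - 1 / (rad y)^2) (at (rad y))"
      by (auto intro!: derivative_eq_intros simp: power2_eq_square)
  qed
  then show ?thesis
    by (simp add: c_inv_r_def power2_eq_square)
qed

lemma dd_on_c_w:
  "dd_on U v (c_w M k) = (\<lambda>y. indicator U y * of_real (rad v)
     * (6 * of_real M * (c_inv_r y * c_inv_r y * c_inv_r y * c_inv_r y) - 2 * (c_inv_r y * c_inv_r y * c_inv_r y)))"
proof -
  have "dd_on U v (c_w M k) = (\<lambda>y. indicator U y * of_real (rad v) * of_real (6 * M / (rad y)^4 - 2 / (rad y)^3))"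
    unfolding c_w_def
    by (rule dd_on_of_real_comp[OF open_exterior bounded_linear_rad, where g' = "\<lambda>r. 6 * M / r^4 - 2 / r^3"])
      (use exterior_D(1) has_real_derivative_w in force)
  then show ?thesis
    by (simp add: c_inv_r_def field_simps eval_nat_numeral)
qed

lemma dd_on_c_inv_w:
  "dd_on U v (c_inv_w M k) = (\<lambda>y. - (indicator U y * of_real (rad v) * (c_inv_w M k y * c_inv_w M k y
     * (6 * of_real M * (c_inv_r y * c_inv_r y * c_inv_r y * c_inv_r y) - 2 * (c_inv_r y * c_inv_r y * c_inv_r y)))))"
proof -
  have "dd_on U v (c_inv_w M k) = (\<lambda>y. indicator U y * of_real (rad v)
      * of_real (- (inverse (w M k (rad y)) * (6 * M / (rad y)^4 - 2 / (rad y)^3) * inverse (w M k (rad y)))))"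
    unfolding c_inv_w_def
  proof (rule dd_on_of_real_comp[OF open_exterior bounded_linear_rad,
        where g' = "\<lambda>r. - (inverse (w M k r) * (6 * M / r^4 - 2 / r^3) * inverse (w M k r))"])
    fix y assume "y \<in> U"
    then have "rad y > 0" "w M k (rad y) \<noteq> 0"
      using exterior_D(1,3) less_imp_neq by metis+
    then show "((\<lambda>r. 1 / w M k r) has_real_derivative
        - (inverse (w M k (rad y)) * (6 * M / (rad y)^4 - 2 / (rad y)^3) * inverse (w M k (rad y)))) (at (rad y))"
      using DERIV_inverse'[OF has_real_derivative_w] by (simp add: divide_inverse)
  qed
  then show ?thesis
    by (auto simp: fun_eq_iff c_inv_w_def c_inv_r_def divide_inverse power4_eq_xxxx power3_eq_cube
        algebra_simps)
qed

lemma dd_on_c_drstar: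
  "dd_on U v (c_drstar M k) = (\<lambda>y. indicator U y * of_real (rad v)
     * (2 * of_real k * of_real k * c_r y + 2 * of_real M * (c_inv_r y * c_inv_r y)))"
proof -
  have "dd_on U v (c_drstar M k) = (\<lambda>y. indicator U y * of_real (rad v) * of_real (2 * k * k * rad y + 2 * M / (rad y)^2))"
    unfolding c_drstar_def
  proof (rule dd_on_of_real_comp[OF open_exterior bounded_linear_rad, where g' = "\<lambda>r. 2 * k * k * r + 2 * M / r^2"])
    fix y assume "y \<in> U"
    then have "rad y \<noteq> 0" using exterior_D(1) less_imp_neq by metis
    then show "((\<lambda>r. Delta M k r / r^2) has_real_derivative 2 * k * k * rad y + 2 * M / (rad y)^2) (at (rad y))"
      unfolding Delta_def by (auto intro!: derivative_eq_intros simp: field_simps eval_nat_numeral)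
  qed
  then show ?thesis
    by (simp add: c_r_def c_inv_r_def field_simps eval_nat_numeral)
qed

lemma dd_on_c_sin: "dd_on U v c_sin = (\<lambda>y. indicator U y * of_real (theta v) * c_cos y)"
  using dd_on_of_real_comp[OF open_exterior bounded_linear_theta, where g = sin and g' = cos]
  unfolding c_sin_def c_cos_def by simp

lemma dd_on_c_cos: "dd_on U v c_cos = (\<lambda>y. - (indicator U y * of_real (theta v) * c_sin y))"
  using dd_on_of_real_comp[OF open_exterior bounded_linear_theta, where g = cos and g' = "\<lambda>x. - sin x"]
  unfolding c_sin_def c_cos_def by simp

lemma dd_on_c_inv_sin:
  "dd_on U v c_inv_sin = (\<lambda>y. - (indicator U y * of_real (theta v) * (c_cos y * c_inv_sin y * c_inv_sin y)))"
proof -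
  have "dd_on U v c_inv_sin = (\<lambda>y. indicator U y * of_real (theta v)
      * of_real (- (cos (theta y) * (1 / sin (theta y)) * (1 / sin (theta y)))))"
    unfolding c_inv_sin_def
  proof (rule dd_on_of_real_comp[OF open_exterior bounded_linear_theta,
        where g' = "\<lambda>t. - (cos t * (1 / sin t) * (1 / sin t))"])
    fix y assume "y \<in> U"
    then have "sin (theta y) \<noteq> 0" using exterior_D(4) less_imp_neq by metis
    then show "((\<lambda>t. 1 / sin t) has_real_derivative - (cos (theta y) * (1 / sin (theta y)) * (1 / sin (theta y))))
        (at (theta y))"
      by (auto intro!: derivative_eq_intros simp: field_simps power2_eq_square)
  qed
  then show ?thesis
    by (simp add: c_inv_sin_def c_cos_def)
qed

section \<open>The operators\<close>

definition "L_on f = (\<lambda>y. dd_on U e_t f y + c_drstar M k y * dd_on U e_r f y)"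
definition "Lbar_on f = (\<lambda>y. dd_on U e_t f y - c_drstar M k y * dd_on U e_r f y)"
definition "wL_on f = (\<lambda>y. c_inv_w M k y * L_on f y)"
definition "wLbar_on f = (\<lambda>y. c_inv_w M k y * Lbar_on f y)"
definition "ang_on (s::int) f = (\<lambda>y. - (c_inv_sin y * dd_on U e_theta (\<lambda>z. c_sin z * dd_on U e_theta f z) y
   + c_inv_sin y * c_inv_sin y * dd_on U e_phi (dd_on U e_phi f) y
   + of_int (2 * s) * \<i> * (c_cos y * c_inv_sin y * c_inv_sin y) * dd_on U e_phi f y
   - 4 * (c_cos y * c_inv_sin y * (c_cos y * c_inv_sin y)) * f y - 4 * f y))"

definition "radial f = (\<lambda>y. 6 * of_real M * c_inv_r y * f y - c_inv_w M k y * L_on (Lbar_on f) y)"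

lemma dd_on_exterior_commute:
  assumes "smooth_on U f"
  shows "dd_on U e_r (dd_on U e_t f) = dd_on U e_t (dd_on U e_r f)"
    "dd_on U e_theta (dd_on U e_t f) = dd_on U e_t (dd_on U e_theta f)"
    "dd_on U e_phi (dd_on U e_t f) = dd_on U e_t (dd_on U e_phi f)"
    "dd_on U e_theta (dd_on U e_r f) = dd_on U e_r (dd_on U e_theta f)"
    "dd_on U e_phi (dd_on U e_r f) = dd_on U e_r (dd_on U e_phi f)"
    "dd_on U e_phi (dd_on U e_theta f) = dd_on U e_theta (dd_on U e_phi f)"
  using dd_on_commute[OF open_exterior assms] by blast+

lemmas smooth_on_exterior_intros = smooth_on_add[OF open_exterior] smooth_on_diff[OF open_exterior]
  smooth_on_mult[OF open_exterior] smooth_on_minus[OF open_exterior] smooth_on_const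
  smooth_on_dd_on[OF open_exterior] smooth_on_indicator[OF open_exterior]
  smooth_on_c_r smooth_on_c_inv_r smooth_on_c_w smooth_on_c_inv_w smooth_on_c_drstar
  smooth_on_c_sin smooth_on_c_cos smooth_on_c_inv_sin

lemmas dd_on_exterior_simps = dd_on_add[OF open_exterior] dd_on_diff[OF open_exterior]
  dd_on_mult[OF open_exterior] dd_on_minus[OF open_exterior] dd_on_const
  dd_on_indicator[OF open_exterior] dd_on_c_r dd_on_c_inv_r dd_on_c_w dd_on_c_inv_w dd_on_c_drstar
  dd_on_c_sin dd_on_c_cos dd_on_c_inv_sin

lemma coefficients_at:
  assumes "x \<in> U"
  defines "r \<equiv> complex_of_real (rad x)"
  defines "D \<equiv> r^2 + of_real k ^2 * r^4 - 2 * of_real M * r"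
  shows "c_r x = r" "c_inv_r x = inverse r" "c_w M k x = D * inverse r ^ 4"
    "c_inv_w M k x = r ^ 4 * inverse D" "c_drstar M k x = D * inverse r ^ 2" "indicator U x = 1"
    and "r * inverse r = 1" "D * inverse D = 1"
proof -
  have "D = of_real (Delta M k (rad x))"
    unfolding D_def r_def Delta_def by simp
  then show "r * inverse r = 1" "D * inverse D = 1"
    using exterior_D(1,2)[OF assms(1)] unfolding r_def by simp_all
  show "c_r x = r" "c_inv_r x = inverse r" "c_w M k x = D * inverse r ^ 4"
    "c_inv_w M k x = r ^ 4 * inverse D" "c_drstar M k x = D * inverse r ^ 2" "indicator U x = 1"
    unfolding c_r_def c_inv_r_def c_w_def c_inv_w_def c_drstar_def w_def Delta_def r_def D_def
    using assms(1) by (simp_all add: divide_inverse power_mult_distrib power_inverse)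
qed

text \<open>After the Leibniz rules and the commutation of coordinate derivatives both sides are
  polynomials in \<open>r\<close>, \<open>1/r\<close>, \<open>1/\<Delta>\<close> and the derivatives of \<open>\<Psi>\<close>; \<open>algebra\<close>
  closes the goal using \<open>r \<cdot> r\<inverse> = 1\<close> and \<open>\<Delta> \<cdot> \<Delta>\<inverse> = 1\<close>.\<close>

lemma wLbar_wLbar_w2_wL_wL:
  assumes "smooth_on U \<Psi>" "x \<in> U"
  shows "wLbar_on (wLbar_on (\<lambda>y. c_w M k y * c_w M k y * wL_on (wL_on \<Psi>) y)) x
    = radial (radial \<Psi>) x - 2 * radial \<Psi> x - 12 * of_real M * dd_on U e_t \<Psi> x"
  using coefficients_at(7,8)[OF assms(2)]
  unfolding wLbar_on_def wL_on_def L_on_def Lbar_on_def radial_def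
  by (simp add: dd_on_exterior_simps smooth_on_exterior_intros assms(1) dd_on_exterior_commute
      coefficients_at(1-6)[OF assms(2)]) algebra

lemma wL_wL_w2_wLbar_wLbar:
  assumes "smooth_on U \<Psi>" "x \<in> U"
  shows "wL_on (wL_on (\<lambda>y. c_w M k y * c_w M k y * wLbar_on (wLbar_on \<Psi>) y)) x
    = radial (radial \<Psi>) x - 2 * radial \<Psi> x + 12 * of_real M * dd_on U e_t \<Psi> x"
  using coefficients_at(7,8)[OF assms(2)]
  unfolding wLbar_on_def wL_on_def L_on_def Lbar_on_def radial_def
  by (simp add: dd_on_exterior_simps smooth_on_exterior_intros assms(1) dd_on_exterior_commute
      coefficients_at(1-6)[OF assms(2)]) algebra

lemma ang_on_radial_commute:
  assumes "smooth_on U \<Psi>" "x \<in> U"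
  shows "ang_on s (\<lambda>y. radial \<Psi> y - 2 * \<Psi> y) x = radial (ang_on s \<Psi>) x - 2 * ang_on s \<Psi> x"
  unfolding ang_on_def L_on_def Lbar_on_def radial_def
  by (simp add: dd_on_exterior_simps smooth_on_exterior_intros assms(1) dd_on_exterior_commute
      coefficients_at(1-6)[OF assms(2)]) algebra

lemma operators_cong:
  assumes "\<And>y. y \<in> U \<Longrightarrow> F y = G y"
  shows "L_on F = L_on G" "Lbar_on F = Lbar_on G" "wL_on F = wL_on G" "wLbar_on F = wLbar_on G"
proof -
  have "dd_on U v F = dd_on U v G" for v
    by (rule dd_on_cong[OF open_exterior assms])
  then show "L_on F = L_on G" "Lbar_on F = Lbar_on G" "wL_on F = wL_on G" "wLbar_on F = wLbar_on G"
    unfolding L_on_def Lbar_on_def wL_on_def wLbar_on_def by simp_all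
qed

lemma radial_cong:
  assumes "\<And>y. y \<in> U \<Longrightarrow> F y = G y" "x \<in> U"
  shows "radial F x = radial G x"
proof -
  have "L_on (Lbar_on F) = L_on (Lbar_on G)"
    using operators_cong(2)[OF assms(1)] by simp
  then show ?thesis
    unfolding radial_def using assms by simp
qed

lemma ang_on_cong:
  assumes "\<And>y. y \<in> U \<Longrightarrow> F y = G y" "x \<in> U"
  shows "ang_on s F x = ang_on s G x"
proof -
  have "dd_on U v F = dd_on U v G" for v
    by (rule dd_on_cong[OF open_exterior assms(1)])
  then show ?thesis
    unfolding ang_on_def using assms by simp
qed

lemma Lop_eq_L_on: "y \<in> U \<Longrightarrow> Lop M k F y = L_on F y"
  and Lbar_eq_Lbar_on: "y \<in> U \<Longrightarrow> Lbar M k F y = Lbar_on F y"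
  by (cases y, simp add: Lop_def Lbar_def L_on_def Lbar_on_def dt_def drstar_def dr_def
      c_drstar_def dd_on_def)+

lemma winvL_eq_wL_on:
  assumes "\<And>z. z \<in> U \<Longrightarrow> F z = G z" "y \<in> U"
  shows "winvL M k F y = wL_on G y"
proof -
  have "winvL M k F y = c_inv_w M k y * Lop M k F y"
    by (cases y) (simp add: winvL_def mul_r_def c_inv_w_def)
  also have "\<dots> = wL_on F y"
    using Lop_eq_L_on[OF assms(2)] by (simp add: wL_on_def)
  finally show ?thesis
    using operators_cong(3)[OF assms(1)] by simp
qed

lemma winvLbar_eq_wLbar_on:
  assumes "\<And>z. z \<in> U \<Longrightarrow> F z = G z" "y \<in> U"
  shows "winvLbar M k F y = wLbar_on G y"
proof -
  have "winvLbar M k F y = c_inv_w M k y * Lbar M k F y"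
    by (cases y) (simp add: winvLbar_def mul_r_def c_inv_w_def)
  also have "\<dots> = wLbar_on F y"
    using Lbar_eq_Lbar_on[OF assms(2)] by (simp add: wLbar_on_def)
  finally show ?thesis
    using operators_cong(4)[OF assms(1)] by simp
qed

lemma mul_r_w_squared: "mul_r (\<lambda>r. (w M k r)\<^sup>2) F y = c_w M k y * c_w M k y * F y"
  by (cases y) (simp add: mul_r_def c_w_def power2_eq_square)

lemma angL_eq_ang_on:
  assumes "y \<in> U"
  shows "angL s F y = ang_on s F y"
proof -
  have inner: "(\<lambda>(t, r, th, ph). complex_of_real (sin th) * dd e_theta F (t, r, th, ph))
      = (\<lambda>z. c_sin z * dd e_theta F z)"
    by (auto simp: c_sin_def)
  have "dth (\<lambda>(t, r, th, ph). complex_of_real (sin th) * dth F (t, r, th, ph)) y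
      = dd_on U e_theta (\<lambda>z. c_sin z * dd_on U e_theta F z) y"
    unfolding dth_def inner
    using dd_cong_open[OF open_exterior assms,
        of "\<lambda>z. c_sin z * dd e_theta F z" "\<lambda>z. c_sin z * dd_on U e_theta F z"] assms
    by (simp add: dd_on_def)
  moreover have "dph (dph F) y = dd_on U e_phi (dd_on U e_phi F) y"
    unfolding dph_def
    using dd_cong_open[OF open_exterior assms, of "dd e_phi F" "dd_on U e_phi F"] assms
    by (simp add: dd_on_def)
  moreover have "dph F y = dd_on U e_phi F y"
    using assms by (simp add: dph_def dd_on_def)
  moreover obtain t r th ph where "y = (t, r, th, ph)"
    by (cases y)
  ultimately show ?thesis
    unfolding angL_def ang_on_def c_sin_def c_cos_def c_inv_sin_def
    by (simp add: cot_def power2_eq_square divide_inverse)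
qed

lemma RW_eq_radial_minus_ang:
  assumes "y \<in> U"
  shows "RW M k s \<Psi> y = c_w M k y * (radial \<Psi> y - ang_on s \<Psi> y)"
proof -
  have "Lop M k (Lbar M k \<Psi>) y = L_on (Lbar_on \<Psi>) y"
    using Lop_eq_L_on[OF assms] operators_cong(1)[OF Lbar_eq_Lbar_on] by simp
  then have "RW M k s \<Psi> y
      = - L_on (Lbar_on \<Psi>) y - c_w M k y * (ang_on s \<Psi> y - 6 * of_real M * c_inv_r y * \<Psi> y)"
    using angL_eq_ang_on[OF assms] by (cases y) (simp add: RW_def c_w_def c_inv_r_def divide_inverse)
  moreover have "c_w M k y * c_inv_w M k y = 1"
    using exterior_D(3)[OF assms] by (simp add: c_w_def c_inv_w_def flip: of_real_mult)
  ultimately show ?thesis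
    unfolding radial_def by algebra
qed

lemma angL_angL_eq_radial_radial:
  assumes "smooth_on U \<Psi>" "\<And>y. y \<in> U \<Longrightarrow> RW M k s \<Psi> y = 0" "x \<in> U"
  shows "angL s (\<lambda>y. angL s \<Psi> y - 2 * \<Psi> y) x = radial (radial \<Psi>) x - 2 * radial \<Psi> x"
proof -
  have ang: "ang_on s \<Psi> y = radial \<Psi> y" if "y \<in> U" for y
    using RW_eq_radial_minus_ang[OF that, of s \<Psi>] assms(2)[OF that] exterior_D(3)[OF that]
    by (simp add: c_w_def)
  have "angL s (\<lambda>y. angL s \<Psi> y - 2 * \<Psi> y) x = ang_on s (\<lambda>y. angL s \<Psi> y - 2 * \<Psi> y) x"
    by (rule angL_eq_ang_on[OF assms(3)])
  also have "\<dots> = ang_on s (\<lambda>y. radial \<Psi> y - 2 * \<Psi> y) x"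
    by (rule ang_on_cong[OF _ assms(3)]) (simp add: angL_eq_ang_on ang)
  also have "\<dots> = radial (ang_on s \<Psi>) x - 2 * ang_on s \<Psi> x"
    by (rule ang_on_radial_commute[OF assms(1,3)])
  also have "\<dots> = radial (radial \<Psi>) x - 2 * radial \<Psi> x"
    using radial_cong[OF ang assms(3)] ang[OF assms(3)] by simp
  finally show ?thesis .
qed

lemma winvLbar_winvLbar_w2_winvL_winvL_eq:
  assumes "x \<in> U"
  shows "winvLbar M k (winvLbar M k (mul_r (\<lambda>r. (w M k r)\<^sup>2) (winvL M k (winvL M k \<Psi>)))) x
    = wLbar_on (wLbar_on (\<lambda>y. c_w M k y * c_w M k y * wL_on (wL_on \<Psi>) y)) x"
proof -
  have "winvL M k \<Psi> z = wL_on \<Psi> z" if "z \<in> U" for z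
    by (rule winvL_eq_wL_on[OF _ that]) (rule refl)
  then have "winvL M k (winvL M k \<Psi>) z = wL_on (wL_on \<Psi>) z" if "z \<in> U" for z
    by (rule winvL_eq_wL_on[OF _ that])
  then have "mul_r (\<lambda>r. (w M k r)\<^sup>2) (winvL M k (winvL M k \<Psi>)) z
      = c_w M k z * c_w M k z * wL_on (wL_on \<Psi>) z" if "z \<in> U" for z
    using that by (simp add: mul_r_w_squared)
  then have "winvLbar M k (mul_r (\<lambda>r. (w M k r)\<^sup>2) (winvL M k (winvL M k \<Psi>))) z
      = wLbar_on (\<lambda>y. c_w M k y * c_w M k y * wL_on (wL_on \<Psi>) y) z" if "z \<in> U" for z
    by (rule winvLbar_eq_wLbar_on[OF _ that])
  then show ?thesis
    by (rule winvLbar_eq_wLbar_on[OF _ assms])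
qed

lemma winvL_winvL_w2_winvLbar_winvLbar_eq:
  assumes "x \<in> U"
  shows "winvL M k (winvL M k (mul_r (\<lambda>r. (w M k r)\<^sup>2) (winvLbar M k (winvLbar M k \<Psi>)))) x
    = wL_on (wL_on (\<lambda>y. c_w M k y * c_w M k y * wLbar_on (wLbar_on \<Psi>) y)) x"
proof -
  have "winvLbar M k \<Psi> z = wLbar_on \<Psi> z" if "z \<in> U" for z
    by (rule winvLbar_eq_wLbar_on[OF _ that]) (rule refl)
  then have "winvLbar M k (winvLbar M k \<Psi>) z = wLbar_on (wLbar_on \<Psi>) z" if "z \<in> U" for z
    by (rule winvLbar_eq_wLbar_on[OF _ that])
  then have "mul_r (\<lambda>r. (w M k r)\<^sup>2) (winvLbar M k (winvLbar M k \<Psi>)) z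
      = c_w M k z * c_w M k z * wLbar_on (wLbar_on \<Psi>) z" if "z \<in> U" for z
    using that by (simp add: mul_r_w_squared)
  then have "winvL M k (mul_r (\<lambda>r. (w M k r)\<^sup>2) (winvLbar M k (winvLbar M k \<Psi>))) z
      = wL_on (\<lambda>y. c_w M k y * c_w M k y * wLbar_on (wLbar_on \<Psi>) y) z" if "z \<in> U" for z
    by (rule winvL_eq_wL_on[OF _ that])
  then show ?thesis
    by (rule winvL_eq_wL_on[OF _ assms])
qed

end

theorem lemma2p10:
  fixes M k :: real and s :: int and \<Psi> :: "point \<Rightarrow> complex"
  assumes "M > 0" and "k > 0"
    and "s = 2 \<or> s = -2"
    and "smooth_on (exterior M k) \<Psi>"
    and "\<And>t r th ph. \<Psi> (t, r, th, ph + 2 * pi) = \<Psi> (t, r, th, ph)"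
    and "\<And>x. x \<in> exterior M k \<Longrightarrow> RW M k s \<Psi> x = 0"
  shows "\<forall>x \<in> exterior M k.
      winvLbar M k (winvLbar M k (mul_r (\<lambda>r. (w M k r)^2) (winvL M k (winvL M k \<Psi>)))) x
        = angL s (\<lambda>y. angL s \<Psi> y - 2 * \<Psi> y) x - of_real (12 * M) * dt \<Psi> x
    \<and> winvL M k (winvL M k (mul_r (\<lambda>r. (w M k r)^2) (winvLbar M k (winvLbar M k \<Psi>)))) x
        = angL s (\<lambda>y. angL s \<Psi> y - 2 * \<Psi> y) x + of_real (12 * M) * dt \<Psi> x"
\<comment> \<open>The identities hold for all \<open>M\<close>, \<open>k\<close>, \<open>s\<close>.\<close>
proof
  fix x assume x: "x \<in> exterior M k"
  have "dt \<Psi> x = dd_on (exterior M k) e_t \<Psi> x"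
    using x by (simp add: dt_def dd_on_def)
  then show "winvLbar M k (winvLbar M k (mul_r (\<lambda>r. (w M k r)^2) (winvL M k (winvL M k \<Psi>)))) x
        = angL s (\<lambda>y. angL s \<Psi> y - 2 * \<Psi> y) x - of_real (12 * M) * dt \<Psi> x
    \<and> winvL M k (winvL M k (mul_r (\<lambda>r. (w M k r)^2) (winvLbar M k (winvLbar M k \<Psi>)))) x
        = angL s (\<lambda>y. angL s \<Psi> y - 2 * \<Psi> y) x + of_real (12 * M) * dt \<Psi> x"
    using angL_angL_eq_radial_radial[OF assms(4,6) x]
      winvLbar_winvLbar_w2_winvL_winvL_eq[OF x] wLbar_wLbar_w2_wL_wL[OF assms(4) x]
      winvL_winvL_w2_winvLbar_winvLbar_eq[OF x] wL_wL_w2_wLbar_wLbar[OF assms(4) x]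
    by simp
qed

end
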